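(* Let $b,w,n$ be positive integers. There exists a coupling $(X,Y)$ with $X\sim\mathrm{Pclas}(b,w,n)$ and $Y\sim\mathrm{Beta}(w,b)$ such that almost surely $$|X-nY|<\frac{b(4w+b+1)}{2}.$$
   Context: $\mathrm{Pclas}(b,w,n)$ denotes the distribution of the number of white balls in a classical Pólya urn after $n$ completed draws, starting with $b$ black and $w$ white balls: at each draw a uniformly random ball is drawn and returned together with one additional ball of the same color. $\mathrm{Beta}(a,b)$ has density proportional to $x^{a-1}(1-x)^{b-1}$ on $(0,1)$. *)

theory Defs
  imports "HOL-Probability.Probability"
begin

text \<open>Classical Polya urn: distribution of the number of white balls in the urn
after n completed draws, starting with b black and w white balls.
After k draws the urn contains b + w + k balls.\<close>
fun Pclas :: "nat \<Rightarrow> nat \<Rightarrow> nat \<Rightarrow> nat pmf" where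
  "Pclas b w 0 = return_pmf w"
| "Pclas b w (Suc n) =
     bind_pmf (Pclas b w n)
       (\<lambda>k. map_pmf (\<lambda>c. if c then Suc k else k)
              (bernoulli_pmf (real k / real (b + w + n))))"

definition beta_density :: "real \<Rightarrow> real \<Rightarrow> real \<Rightarrow> real" where
  "beta_density a b x =
     (if 0 < x \<and> x < 1 then x powr (a - 1) * (1 - x) powr (b - 1) / Beta a b else 0)"

definition Beta_distr :: "real \<Rightarrow> real \<Rightarrow> real measure" where
  "Beta_distr a b = density lborel (\<lambda>x. ennreal (beta_density a b x))"

end

theory Submission
  imports Defs
begin

text \<open>The coupling is inverse transform sampling: if \<open>G\<close> is the distribution function of
  Beta(\<open>w\<close>, \<open>b\<close>) and \<open>F\<close> that of the urn, then \<open>G(Y)\<close> is uniform and \<open>X\<close> is the \<open>F\<close>-quantile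
  of \<open>G(Y)\<close>. For integer parameters \<open>G(y) = P(Bin(w + b - 1, y) \<ge> w)\<close>. Removing one ball from
  the initial urn expresses \<open>F\<close> as a mixture with weight \<open>k / (n + w + b - 1)\<close> of the
  distribution functions of smaller urns, while conditioning on one trial expresses the binomial
  tail as the same kind of mixture with weight \<open>y\<close>. Comparing the weights, induction on \<open>w + b\<close>
  gives \<open>F(k) \<le> G(y)\<close> for \<open>k \<le> n y\<close> and \<open>F(k) \<ge> G(y)\<close> for \<open>k \<ge> y (n + w + b - 1) + w + b - 1\<close>,
  hence \<open>n Y \<le> X < n Y + 2 (w + b) - 1\<close>.\<close>

section \<open>The classical Polya urn\<close>

lemma set_pmf_Pclas: "set_pmf (Pclas b w n) \<subseteq> {w..w + n}"
  by (induction n) (force split: if_splits)+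

lemma finite_set_pmf_Pclas: "finite (set_pmf (Pclas b w n))"
  using set_pmf_Pclas by (rule finite_subset) simp

lemma pmf_Pclas_outside: "k \<notin> {w..w + n} \<Longrightarrow> pmf (Pclas b w n) k = 0"
  using set_pmf_Pclas by (meson pmf_eq_0_set_pmf subsetD)

lemma bernoulli_pmf_0: "bernoulli_pmf 0 = return_pmf False"
  and bernoulli_pmf_1: "bernoulli_pmf 1 = return_pmf True"
  by (rule pmf_eqI, simp split: split_indicator)+

lemma Pclas_white_0: "Pclas b 0 n = return_pmf 0"
  by (induction n) (simp_all add: bernoulli_pmf_0 bind_return_pmf)

lemma Pclas_black_0: "w > 0 \<Longrightarrow> Pclas 0 w n = return_pmf (w + n)"
  by (induction n) (simp_all add: bernoulli_pmf_1 bind_return_pmf)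

lemma pmf_map_bernoulli_Suc:
  assumes "0 \<le> q" "q \<le> 1"
  shows "pmf (map_pmf (\<lambda>c. if c then Suc a else a) (bernoulli_pmf q)) y =
           (if y = Suc a then q else 0) + (if y = a then 1 - q else 0)"
  using assms by (simp add: map_pmf_def pmf_bind split: split_indicator)

lemma pmf_Pclas_Suc:
  "pmf (Pclas b w (Suc n)) y =
     (if y = 0 then 0 else pmf (Pclas b w n) (y - 1) * (real (y - 1) / real (b + w + n)))
     + pmf (Pclas b w n) y * (1 - real y / real (b + w + n))"
proof -
  let ?p = "Pclas b w n" and ?A = "{w..w + n}"
  let ?q = "\<lambda>a::nat. real a / real (b + w + n)"
  have q: "a \<in> ?A \<Longrightarrow> 0 \<le> ?q a \<and> ?q a \<le> 1" for a
    by (cases "b + w + n = 0") (auto simp: divide_simps)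
  have "pmf (Pclas b w (Suc n)) y =
      (\<Sum>a\<in>?A. pmf (map_pmf (\<lambda>c. if c then Suc a else a) (bernoulli_pmf (?q a))) y * pmf ?p a)"
    by (simp add: pmf_bind, subst integral_measure_pmf_real[where A = ?A])
       (auto dest: set_pmf_Pclas[THEN subsetD])
  also have "\<dots> = (\<Sum>a\<in>?A. ((if y = Suc a then ?q a else 0) + (if y = a then 1 - ?q a else 0)) * pmf ?p a)"
    by (intro sum.cong refl, subst pmf_map_bernoulli_Suc) (use q in auto)
  also have "\<dots> = (\<Sum>a\<in>?A. if a = y - 1 \<and> y \<noteq> 0 then ?q a * pmf ?p a else 0)
                 + (\<Sum>a\<in>?A. if a = y then (1 - ?q a) * pmf ?p a else 0)"
    by (subst sum.distrib[symmetric], intro sum.cong refl) auto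
  also have "\<dots> = (if y = 0 then 0 else pmf ?p (y - 1) * ?q (y - 1)) + pmf ?p y * (1 - ?q y)"
    using pmf_Pclas_outside[of "y - 1" w n b] pmf_Pclas_outside[of y w n b]
    by auto
  finally show ?thesis by simp
qed

definition Pclas_cdf :: "nat \<Rightarrow> nat \<Rightarrow> nat \<Rightarrow> nat \<Rightarrow> real" where
  "Pclas_cdf b w n k = measure_pmf.prob (Pclas b w n) {..k}"

lemma Pclas_cdf_eq_sum: "Pclas_cdf b w n k = (\<Sum>x\<le>k. pmf (Pclas b w n) x)"
  by (simp add: Pclas_cdf_def measure_measure_pmf_finite)

lemma Pclas_cdf_nonneg: "0 \<le> Pclas_cdf b w n k"
  by (simp add: Pclas_cdf_def)

lemma Pclas_cdf_eq_1: "w + n \<le> k \<Longrightarrow> Pclas_cdf b w n k = 1"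
  unfolding Pclas_cdf_eq_sum by (rule sum_pmf_eq_1) (use set_pmf_Pclas in force)+

lemma Pclas_cdf_0: "Pclas_cdf b w 0 k = (if w \<le> k then 1 else 0)"
  by (simp add: Pclas_cdf_def)

lemma Pclas_cdf_white_0: "Pclas_cdf b 0 n k = 1"
  by (simp add: Pclas_cdf_def Pclas_white_0)

lemma Pclas_cdf_black_0: "w > 0 \<Longrightarrow> Pclas_cdf 0 w n k = (if w + n \<le> k then 1 else 0)"
  by (simp add: Pclas_cdf_def Pclas_black_0)

lemma Pclas_cdf_Suc:
  "Pclas_cdf b w (Suc n) k = real k / real (b + w + n) * Pclas_cdf b w n (k - 1)
      + (1 - real k / real (b + w + n)) * Pclas_cdf b w n k"
proof (induction k)
  case 0
  then show ?case by (simp add: Pclas_cdf_eq_sum pmf_Pclas_Suc del: Pclas.simps)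
next
  case (Suc k)
  let ?F = "Pclas_cdf b w n" and ?T = "real (b + w + n)"
  have "real k / ?T * ?F k = real k / ?T * ?F (k - 1) + real k / ?T * pmf (Pclas b w n) k"
    by (cases k) (simp_all add: Pclas_cdf_eq_sum algebra_simps)
  moreover have "real (Suc k) / ?T = real k / ?T + 1 / ?T"
    by (simp add: add_divide_distrib)
  ultimately show ?case
    using Suc pmf_Pclas_Suc[of b w n "Suc k"] by (simp add: Pclas_cdf_eq_sum algebra_simps)
qed

lemma mixture_recurrences_commute:
  fixes m j A B C D :: real
  assumes "m > 0"
  shows "(j + 1) / (m + 1) * (j / m * A + (1 - j / m) * C)
           + (1 - (j + 1) / (m + 1)) * ((j + 1) / m * B + (1 - (j + 1) / m) * D)
       = (j + 1) / (m + 1) * (j / m * A + (1 - j / m) * B)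
           + (1 - (j + 1) / (m + 1)) * ((j + 1) / m * C + (1 - (j + 1) / m) * D)"
proof -
  have "m \<noteq> 0" "m + 1 \<noteq> 0" using assms by auto
  then show ?thesis by (simp add: divide_simps) (simp add: algebra_simps)
qed

text \<open>Both sides satisfy the recurrence \<open>Pclas_cdf_Suc\<close> in \<open>n\<close>, and the two ways of
  composing the recurrences agree.\<close>
lemma Pclas_cdf_decompose:
  assumes "w \<ge> 1" "b \<ge> 1"
  shows "Pclas_cdf b w n k = real k / real (n + w + b - 1) * Pclas_cdf b (w - 1) n (k - 1)
           + (1 - real k / real (n + w + b - 1)) * Pclas_cdf (b - 1) w n k"
  using assms
proof (induction n arbitrary: k)
  case 0
  then show ?case
    by (cases "w \<le> k"; cases k) (auto simp: Pclas_cdf_0 algebra_simps)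
next
  case (Suc n)
  let ?m = "real (n + w + b - 1)"
  have m: "?m > 0" "real (b + (w - 1) + n) = ?m" "real (b - 1 + w + n) = ?m"
    "real (b + w + n) = ?m + 1" "real (Suc n + w + b - 1) = ?m + 1"
    using Suc.prems by auto
  show ?case
  proof (cases k)
    case 0
    then show ?thesis
      using Suc Pclas_cdf_Suc[of b w n 0] Pclas_cdf_Suc[of "b - 1" w n 0] by simp
  next
    case (Suc j)
    let ?A = "Pclas_cdf b (w - 1) n (j - 1)" and ?B = "Pclas_cdf b (w - 1) n j"
    let ?C = "Pclas_cdf (b - 1) w n j" and ?D = "Pclas_cdf (b - 1) w n k"
    have k: "real k = real j + 1" using Suc by simp
    have "Pclas_cdf b w (Suc n) k
        = (real j + 1) / (?m + 1) * Pclas_cdf b w n j + (1 - (real j + 1) / (?m + 1)) * Pclas_cdf b w n k"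
      using Pclas_cdf_Suc[of b w n k] unfolding m k by (simp add: Suc)
    also have "\<dots> = (real j + 1) / (?m + 1) * (real j / ?m * ?A + (1 - real j / ?m) * ?C)
        + (1 - (real j + 1) / (?m + 1)) * ((real j + 1) / ?m * ?B + (1 - (real j + 1) / ?m) * ?D)"
      using Suc.IH[of j] Suc.IH[of k] Suc.prems unfolding k by (simp add: Suc)
    also have "\<dots> = (real j + 1) / (?m + 1) * (real j / ?m * ?A + (1 - real j / ?m) * ?B)
        + (1 - (real j + 1) / (?m + 1)) * ((real j + 1) / ?m * ?C + (1 - (real j + 1) / ?m) * ?D)"
      by (rule mixture_recurrences_commute[OF m(1)])
    also have "\<dots> = real k / real (Suc n + w + b - 1) * Pclas_cdf b (w - 1) (Suc n) (k - 1)
        + (1 - real k / real (Suc n + w + b - 1)) * Pclas_cdf (b - 1) w (Suc n) k"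
      using Pclas_cdf_Suc[of b "w - 1" n j] Pclas_cdf_Suc[of "b - 1" w n k] unfolding m k
      by (simp add: Suc)
    finally show ?thesis .
  qed
qed

section \<open>Binomial tails\<close>

text \<open>The probability that \<open>r\<close> independent Bernoulli(\<open>p\<close>) trials have at least \<open>w\<close> successes,
  by conditioning on the last trial.\<close>
fun binomial_tail :: "nat \<Rightarrow> real \<Rightarrow> nat \<Rightarrow> real" where
  "binomial_tail 0 p w = (if w = 0 then 1 else 0)"
| "binomial_tail (Suc r) p w =
     (if w = 0 then 1 else p * binomial_tail r p (w - 1) + (1 - p) * binomial_tail r p w)"

lemma binomial_tail_0_right [simp]: "binomial_tail r p 0 = 1"
  by (cases r) auto

lemma binomial_tail_eq_0: "r < w \<Longrightarrow> binomial_tail r p w = 0"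
  by (induction r arbitrary: w) auto

lemma binomial_tail_bounds:
  assumes "0 \<le> p" "p \<le> 1"
  shows "0 \<le> binomial_tail r p w \<and> binomial_tail r p w \<le> 1"
proof (induction r arbitrary: w)
  case (Suc r)
  then show ?case
    using Suc.IH[of "w - 1"] Suc.IH[of w] assms
    by (auto intro!: add_nonneg_nonneg mult_nonneg_nonneg
        convex_bound_le[where x = "binomial_tail r p (w - 1)" and y = "binomial_tail r p w"
          and a = 1 and u = p and v = "1 - p", simplified])
qed simp

lemma binomial_tail_at_0: "w > 0 \<Longrightarrow> binomial_tail r 0 w = 0"
  by (induction r arbitrary: w) auto

lemma binomial_tail_at_1: "w \<le> r \<Longrightarrow> binomial_tail r 1 w = 1"
  by (induction r arbitrary: w) (auto simp: binomial_tail_eq_0)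

lemma Bernstein_Suc_0: "Bernstein (Suc r) 0 p = (1 - p) * Bernstein r 0 p"
  by (simp add: Bernstein_def)

lemma Bernstein_Suc_Suc:
  "p * Bernstein r u p + (1 - p) * Bernstein r (Suc u) p = Bernstein (Suc r) (Suc u) p"
proof (cases "u < r")
  case True
  then have "r - u = Suc (r - Suc u)" by simp
  with True show ?thesis by (simp add: Bernstein_def algebra_simps)
next
  case False
  then have "r choose Suc u = 0" by simp
  with False show ?thesis by (simp add: Bernstein_def algebra_simps)
qed

lemma binomial_tail_diff: "binomial_tail r p v - binomial_tail r p (Suc v) = Bernstein r v p"
proof (induction r arbitrary: v)
  case 0
  then show ?case by (simp add: Bernstein_def)
next
  case (Suc r)
  show ?case
  proof (cases v)
    case 0
    have "Bernstein r 0 p = 1 - binomial_tail r p (Suc 0)" using Suc.IH[of 0] by simp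
    then show ?thesis using 0 by (simp only: Bernstein_Suc_0) (simp add: algebra_simps)
  next
    case (Suc u)
    then show ?thesis
      using Suc.IH[of u] Suc.IH[of "Suc u"] Bernstein_Suc_Suc[of p r u] by (simp add: algebra_simps)
  qed
qed

lemma binomial_tail_antimono:
  assumes "0 \<le> p" "p \<le> 1"
  shows "binomial_tail r p (Suc w) \<le> binomial_tail r p w"
  using binomial_tail_diff[of r p w] Bernstein_nonneg[OF assms, of r w] by linarith

lemma binomial_tail_has_real_derivative:
  "((\<lambda>p. binomial_tail r p w) has_real_derivative
     (if w = 0 then 0 else real r * Bernstein (r - 1) (w - 1) p)) (at p)"
proof (induction r arbitrary: w)
  case (Suc r)
  let ?D = "\<lambda>v. if v = 0 then 0 else real r * Bernstein (r - 1) (v - 1) p"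
  show ?case
  proof (cases w)
    case (Suc v)
    have f: "(\<lambda>p. binomial_tail (Suc r) p w)
        = (\<lambda>p. p * binomial_tail r p v + (1 - p) * binomial_tail r p (Suc v))"
      using Suc by simp
    have d: "((\<lambda>p. p * binomial_tail r p v + (1 - p) * binomial_tail r p (Suc v)) has_real_derivative
        1 * binomial_tail r p v + ?D v * p + ((0 - 1) * binomial_tail r p (Suc v) + ?D (Suc v) * (1 - p)))
        (at p)"
      by (intro DERIV_add DERIV_mult DERIV_ident DERIV_diff DERIV_const Suc.IH)
    have "p * ?D v + (1 - p) * ?D (Suc v) = real r * Bernstein r v p"
    proof (cases r)
      case (Suc r')
      then show ?thesis
        by (cases v) (simp_all add: Bernstein_Suc_0 Bernstein_Suc_Suc[symmetric] algebra_simps)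
    qed simp
    then have "1 * binomial_tail r p v + ?D v * p + ((0 - 1) * binomial_tail r p (Suc v) + ?D (Suc v) * (1 - p))
        = (if w = 0 then 0 else real (Suc r) * Bernstein (Suc r - 1) (w - 1) p)"
      using binomial_tail_diff[of r p v] Suc by (simp add: algebra_simps)
    then show ?thesis unfolding f by (rule DERIV_cong[OF d])
  qed simp
qed simp

lemma continuous_on_binomial_tail: "continuous_on S (\<lambda>p. binomial_tail r p w)"
  using binomial_tail_has_real_derivative
  by (meson DERIV_isCont continuous_at_imp_continuous_on)

lemma binomial_tail_strict_mono:
  assumes "1 \<le> w" "w \<le> r" "0 \<le> x" "x < y" "y \<le> 1"
  shows "binomial_tail r x w < binomial_tail r y w"
proof (rule DERIV_pos_imp_increasing_open[OF assms(4) _ continuous_on_binomial_tail])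
  fix t assume "x < t" "t < y"
  with assms have "0 < real r * Bernstein (r - 1) (w - 1) t"
    by (intro mult_pos_pos Bernstein_pos) auto
  with assms show "\<exists>d. ((\<lambda>p. binomial_tail r p w) has_real_derivative d) (at t) \<and> 0 < d"
    using binomial_tail_has_real_derivative[of r w t] by auto
qed

lemma binomial_tail_mono:
  assumes "1 \<le> w" "w \<le> r" "0 \<le> x" "x \<le> y" "y \<le> 1"
  shows "binomial_tail r x w \<le> binomial_tail r y w"
  using binomial_tail_strict_mono[of w r x y] assms by (cases "x = y") auto

lemma binomial_tail_Suc_eq:
  "w \<ge> 1 \<Longrightarrow> binomial_tail (Suc r) p w
     = binomial_tail r p w + p * (binomial_tail r p (w - 1) - binomial_tail r p w)"
  by (simp add: algebra_simps)

lemma mixture_le_binomial_tail_Suc: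
  assumes "0 \<le> p" "p \<le> 1" "w \<ge> 1" "q \<le> p"
  shows "q * binomial_tail r p (w - 1) + (1 - q) * binomial_tail r p w \<le> binomial_tail (Suc r) p w"
proof -
  have "0 \<le> binomial_tail r p (w - 1) - binomial_tail r p w"
    using binomial_tail_antimono[OF assms(1,2), of r "w - 1"] assms(3) by simp
  with assms(4) have "q * (binomial_tail r p (w - 1) - binomial_tail r p w)
      \<le> p * (binomial_tail r p (w - 1) - binomial_tail r p w)"
    by (rule mult_right_mono)
  then show ?thesis unfolding binomial_tail_Suc_eq[OF assms(3)] by (simp add: algebra_simps)
qed

lemma binomial_tail_Suc_le_mixture:
  assumes "0 \<le> p" "p \<le> 1" "w \<ge> 1" "p \<le> q"
  shows "binomial_tail (Suc r) p w \<le> q * binomial_tail r p (w - 1) + (1 - q) * binomial_tail r p w"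
proof -
  have "0 \<le> binomial_tail r p (w - 1) - binomial_tail r p w"
    using binomial_tail_antimono[OF assms(1,2), of r "w - 1"] assms(3) by simp
  with assms(4) have "p * (binomial_tail r p (w - 1) - binomial_tail r p w)
      \<le> q * (binomial_tail r p (w - 1) - binomial_tail r p w)"
    by (rule mult_right_mono)
  then show ?thesis unfolding binomial_tail_Suc_eq[OF assms(3)] by (simp add: algebra_simps)
qed

section \<open>Comparing the urn with binomial tails\<close>

lemma Pclas_cdf_le_binomial_tail:
  assumes p: "0 \<le> p" "p \<le> 1" and k: "real k \<le> p * real n"
  shows "Pclas_cdf b w n k \<le> binomial_tail (w + b - 1) p w"
  using k
proof (induction "w + b" arbitrary: w b k rule: less_induct)
  case less
  have kn: "real k \<le> real n"
    using less.prems p by (meson mult_left_le_one_le of_nat_0_le_iff order_trans)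
  consider "w = 0" | "w > 0" "b = 0" | "w \<ge> 1" "b \<ge> 1" by linarith
  then show ?case
  proof cases
    case 1
    then show ?thesis by (simp add: Pclas_cdf_white_0)
  next
    case 2
    then show ?thesis using kn by (simp add: Pclas_cdf_black_0 binomial_tail_eq_0)
  next
    case 3
    define q where "q = real k / real (n + w + b - 1)"
    have "real n \<le> real (n + w + b - 1)" using 3 by simp
    then have "real k \<le> p * real (n + w + b - 1)"
      using less.prems p by (meson mult_left_mono order_trans)
    then have q: "0 \<le> q" "q \<le> p"
      using 3 by (auto simp: q_def divide_simps mult.commute)
    define r where "r = w + b - 2"
    have r: "w + b - 1 = Suc r" "w - 1 + b - 1 = r" "w + (b - 1) - 1 = r"
      using 3 by (simp_all add: r_def)
    have "real (k - 1) \<le> p * real n" using less.prems by (cases k) auto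
    then have IH_white: "Pclas_cdf b (w - 1) n (k - 1) \<le> binomial_tail r p (w - 1)"
      using less.hyps[of "w - 1" b "k - 1", unfolded r(2)] 3 r by simp
    have IH_black: "Pclas_cdf (b - 1) w n k \<le> binomial_tail r p w"
      using less.hyps[of w "b - 1" k, unfolded r(3)] less.prems 3 r by simp
    have "Pclas_cdf b w n k = q * Pclas_cdf b (w - 1) n (k - 1) + (1 - q) * Pclas_cdf (b - 1) w n k"
      using Pclas_cdf_decompose[of w b n k] 3 by (simp add: q_def)
    also have "\<dots> \<le> q * binomial_tail r p (w - 1) + (1 - q) * binomial_tail r p w"
      using IH_white IH_black q p by (intro add_mono mult_left_mono) auto
    also have "\<dots> \<le> binomial_tail (w + b - 1) p w"
      unfolding r(1) using mixture_le_binomial_tail_Suc p 3 q by blast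
    finally show ?thesis .
  qed
qed

lemma binomial_tail_le_Pclas_cdf:
  assumes p: "0 \<le> p" "p \<le> 1"
    and k: "p * (real n + real w + real b - 1) + (real w + real b - 1) \<le> real k"
  shows "binomial_tail (w + b - 1) p w \<le> Pclas_cdf b w n k"
  using k
proof (induction "w + b" arbitrary: w b k rule: less_induct)
  case less
  consider "w = 0" | "w > 0" "b = 0" | "w + n \<le> k" | "w \<ge> 1" "b \<ge> 1" "k < w + n" by linarith
  then show ?case
  proof cases
    case 1
    then show ?thesis by (simp add: Pclas_cdf_white_0)
  next
    case 2
    then show ?thesis using Pclas_cdf_nonneg by (simp add: binomial_tail_eq_0)
  next
    case 3
    then show ?thesis using Pclas_cdf_eq_1 binomial_tail_bounds[OF p] by simp
  next
    case 4
    define q where "q = real k / real (n + w + b - 1)"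
    have M: "real (n + w + b - 1) = real n + real w + real b - 1" using 4 by auto
    have "p * real (n + w + b - 1) \<le> real k" "real k \<le> real (n + w + b - 1)"
      using less.prems 4 unfolding M by auto
    then have q: "p \<le> q" "q \<le> 1"
      using 4 by (auto simp: q_def divide_simps mult.commute)
    define r where "r = w + b - 2"
    have r: "w + b - 1 = Suc r" "w - 1 + b - 1 = r" "w + (b - 1) - 1 = r"
      using 4 by (simp_all add: r_def)
    have w1: "real (w - 1) = real w - 1" and b1: "real (b - 1) = real b - 1"
      using 4 by auto
    have "0 \<le> p * (real n + real w + real b - 1)" using p 4 by simp
    then have k1: "real (k - 1) = real k - 1"
      using less.prems 4 by (cases k) auto
    have "p * (real n + real (w - 1) + real b - 1) \<le> p * (real n + real w + real b - 1)"
      using p w1 by (intro mult_left_mono) auto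
    then have IH_white: "binomial_tail r p (w - 1) \<le> Pclas_cdf b (w - 1) n (k - 1)"
      using less.hyps[of "w - 1" b "k - 1", unfolded r(2)] less.prems 4 k1 w1 r by simp
    have "p * (real n + real w + real (b - 1) - 1) \<le> p * (real n + real w + real b - 1)"
      using p b1 by (intro mult_left_mono) auto
    then have IH_black: "binomial_tail r p w \<le> Pclas_cdf (b - 1) w n k"
      using less.hyps[of w "b - 1" k, unfolded r(3)] less.prems 4 b1 r by simp
    have "binomial_tail (w + b - 1) p w
        \<le> q * binomial_tail r p (w - 1) + (1 - q) * binomial_tail r p w"
      unfolding r(1) using binomial_tail_Suc_le_mixture p 4 q by blast
    also have "\<dots> \<le> q * Pclas_cdf b (w - 1) n (k - 1) + (1 - q) * Pclas_cdf (b - 1) w n k"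
      using IH_white IH_black q p by (intro add_mono mult_left_mono) auto
    also have "\<dots> = Pclas_cdf b w n k"
      using Pclas_cdf_decompose[of w b n k] 4 by (simp add: q_def)
    finally show ?thesis .
  qed
qed

section \<open>The Beta distribution with integer parameters\<close>

lemma Beta_of_nat:
  assumes "w \<ge> 1" "b \<ge> 1"
  shows "Beta (real w) (real b) = fact (w - 1) * fact (b - 1) / fact (w + b - 1)"
proof -
  have Gamma: "Gamma (real m) = fact (m - 1)" if "m \<ge> 1" for m
    using Gamma_fact[of "m - 1"] that by (simp add: of_nat_diff)
  show ?thesis
    unfolding Beta_def using assms Gamma[of w] Gamma[of b] Gamma[of "w + b"]
    by (simp add: of_nat_add[symmetric] del: of_nat_add)
qed

lemma beta_density_of_nat:
  assumes "w \<ge> 1" "b \<ge> 1" "0 < t" "t < 1"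
  shows "beta_density (real w) (real b) t = real (w + b - 1) * Bernstein (w + b - 1 - 1) (w - 1) t"
proof -
  have K: "w + b - 1 - 1 - (w - 1) = b - 1" "w - 1 \<le> w + b - 1 - 1" using assms by auto
  obtain m where m: "w + b - 1 = Suc m" using assms by (cases "w + b - 1") auto
  have "real (w + b - 1 - 1 choose (w - 1)) = fact (w + b - 1 - 1) / (fact (w - 1) * fact (b - 1))"
    using binomial_fact[OF K(2)] K(1) by simp
  moreover have "real (w + b - 1) * fact (w + b - 1 - 1) = (fact (w + b - 1) :: real)"
    unfolding m by simp
  ultimately have binom: "real (w + b - 1) * real (w + b - 1 - 1 choose (w - 1))
      = fact (w + b - 1) / (fact (w - 1) * fact (b - 1))"
    by (simp add: field_simps)
  have "t powr (real w - 1) = t ^ (w - 1)" "(1 - t) powr (real b - 1) = (1 - t) ^ (b - 1)"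
    using assms by (simp_all add: powr_realpow[symmetric] of_nat_diff)
  then have "beta_density (real w) (real b) t
      = t ^ (w - 1) * (1 - t) ^ (b - 1) / (fact (w - 1) * fact (b - 1) / fact (w + b - 1))"
    unfolding beta_density_def using assms Beta_of_nat[OF assms(1,2)] by simp
  also have "\<dots> = real (w + b - 1) * real (w + b - 1 - 1 choose (w - 1)) * (t ^ (w - 1) * (1 - t) ^ (b - 1))"
    unfolding binom by (simp add: divide_simps)
  finally show ?thesis unfolding Bernstein_def K(1) by (simp add: mult_ac)
qed

lemma beta_density_nonneg: "w \<ge> 1 \<Longrightarrow> b \<ge> 1 \<Longrightarrow> 0 \<le> beta_density (real w) (real b) x"
  unfolding beta_density_def using Beta_of_nat[of w b] by simp

lemma borel_measurable_beta_density [measurable]: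
  "(\<lambda>x. ennreal (beta_density a b x)) \<in> borel_measurable borel"
  unfolding beta_density_def by measurable

lemma sets_Beta_distr [simp, measurable_cong]: "sets (Beta_distr a b) = sets borel"
  and space_Beta_distr [simp]: "space (Beta_distr a b) = UNIV"
  by (simp_all add: Beta_distr_def)

definition Beta_cdf :: "nat \<Rightarrow> nat \<Rightarrow> real \<Rightarrow> real" where
  "Beta_cdf w b y = binomial_tail (w + b - 1) (max 0 (min 1 y)) w"

lemma emeasure_Beta_distr_atMost:
  assumes "w \<ge> 1" "b \<ge> 1"
  shows "emeasure (Beta_distr (real w) (real b)) {..y} = ennreal (Beta_cdf w b y)"
proof -
  define y' where "y' = max 0 (min 1 y)"
  let ?f = "beta_density (real w) (real b)" and ?r = "w + b - 1"
  have y': "0 \<le> y'" "y' \<le> 1" by (auto simp: y'_def)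
  have ftc: "((\<lambda>t. real ?r * Bernstein (?r - 1) (w - 1) t) has_integral
      binomial_tail ?r y' w - binomial_tail ?r 0 w) {0..y'}"
  proof (rule fundamental_theorem_of_calculus)
    fix x assume "x \<in> {0..y'}"
    show "((\<lambda>t. binomial_tail ?r t w) has_vector_derivative real ?r * Bernstein (?r - 1) (w - 1) x)
        (at x within {0..y'})"
      using binomial_tail_has_real_derivative[of ?r w x] assms
      unfolding has_real_derivative_iff_has_vector_derivative
      by (auto intro: has_vector_derivative_at_within)
  qed (use y' in simp)
  have int: "(?f has_integral binomial_tail ?r y' w) {0..y'}"
  proof (rule has_integral_spike_finite[where S = "{0, 1}"])
    show "((\<lambda>t. real ?r * Bernstein (?r - 1) (w - 1) t) has_integral binomial_tail ?r y' w) {0..y'}"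
      using ftc binomial_tail_at_0[of w ?r] assms by simp
    fix x assume "x \<in> {0..y'} - {0, 1}"
    with y' show "?f x = real ?r * Bernstein (?r - 1) (w - 1) x"
      using beta_density_of_nat[OF assms] by auto
  qed simp
  have "emeasure (Beta_distr (real w) (real b)) {..y} = (\<integral>\<^sup>+ x. ennreal (?f x) * indicator {..y} x \<partial>lborel)"
    unfolding Beta_distr_def by (subst emeasure_density) auto
  also have "\<dots> = (\<integral>\<^sup>+ x. ennreal (?f x) * indicator {0..y'} x \<partial>lborel)"
    by (intro nn_integral_cong) (auto simp: beta_density_def y'_def split: split_indicator)
  also have "\<dots> = ennreal (binomial_tail ?r y' w)"
    using beta_density_nonneg assms by (intro nn_integral_has_integral_lebesgue' int)
  finally show ?thesis by (simp add: Beta_cdf_def y'_def)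
qed

lemma prob_space_Beta_distr:
  assumes "w \<ge> 1" "b \<ge> 1"
  shows "prob_space (Beta_distr (real w) (real b))"
proof
  let ?B = "Beta_distr (real w) (real b)" and ?f = "beta_density (real w) (real b)"
  have "emeasure ?B UNIV = (\<integral>\<^sup>+ x. ennreal (?f x) * indicator UNIV x \<partial>lborel)"
    unfolding Beta_distr_def by (subst emeasure_density) auto
  also have "\<dots> = (\<integral>\<^sup>+ x. ennreal (?f x) * indicator {..1} x \<partial>lborel)"
    by (intro nn_integral_cong) (simp add: beta_density_def split: split_indicator)
  also have "\<dots> = emeasure ?B {..1}"
    unfolding Beta_distr_def by (subst emeasure_density) auto
  also have "\<dots> = 1"
    using emeasure_Beta_distr_atMost[OF assms, of 1] binomial_tail_at_1[of w "w + b - 1"] assms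
    by (simp add: Beta_cdf_def)
  finally show "emeasure ?B (space ?B) = 1" by simp
qed

lemma continuous_on_Beta_cdf: "continuous_on S (Beta_cdf w b)"
  unfolding Beta_cdf_def
  by (rule continuous_on_compose2[OF continuous_on_binomial_tail[of UNIV]])
     (auto intro!: continuous_intros)

lemma borel_measurable_Beta_cdf [measurable]: "Beta_cdf w b \<in> borel_measurable borel"
  by (rule borel_measurable_continuous_onI[OF continuous_on_Beta_cdf])

lemma Beta_cdf_bounds: "0 \<le> Beta_cdf w b y \<and> Beta_cdf w b y \<le> 1"
  unfolding Beta_cdf_def by (rule binomial_tail_bounds) auto

lemma emeasure_Beta_cdf_le:
  assumes w: "w \<ge> 1" and b: "b \<ge> 1" and v: "0 \<le> v" "v \<le> 1"
  shows "emeasure (Beta_distr (real w) (real b)) {y. Beta_cdf w b y \<le> v} = ennreal v"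
proof (cases "v = 1")
  case True
  interpret prob_space "Beta_distr (real w) (real b)"
    by (rule prob_space_Beta_distr[OF w b])
  have "{y. Beta_cdf w b y \<le> v} = space (Beta_distr (real w) (real b))"
    using True Beta_cdf_bounds by auto
  then show ?thesis using True emeasure_space_1 by simp
next
  case False
  let ?r = "w + b - 1"
  have wr: "1 \<le> w" "w \<le> ?r" using w b by auto
  obtain a where a: "0 \<le> a" "a \<le> 1" "binomial_tail ?r a w = v"
    using IVT'[of "\<lambda>t. binomial_tail ?r t w" 0 v 1] binomial_tail_at_0[of w ?r]
      binomial_tail_at_1[OF wr(2)] continuous_on_binomial_tail v w by auto
  have a1: "a < 1" using a False binomial_tail_at_1[OF wr(2)] by (cases "a = 1") auto
  have "{y. Beta_cdf w b y \<le> v} = {..a}"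
  proof (intro set_eqI iffI)
    fix y assume "y \<in> {y. Beta_cdf w b y \<le> v}"
    then have le: "binomial_tail ?r (max 0 (min 1 y)) w \<le> binomial_tail ?r a w"
      using a by (simp add: Beta_cdf_def)
    show "y \<in> {..a}"
    proof (rule ccontr)
      assume "y \<notin> {..a}"
      then have "a < max 0 (min 1 y)" using a a1 by auto
      then show False using le binomial_tail_strict_mono[OF wr a(1)] by force
    qed
  next
    fix y assume "y \<in> {..a}"
    then have "max 0 (min 1 y) \<le> a" using a by auto
    then show "y \<in> {y. Beta_cdf w b y \<le> v}"
      using binomial_tail_mono[OF wr _ _ a(2)] a by (simp add: Beta_cdf_def)
  qed
  then show ?thesis using emeasure_Beta_distr_atMost[OF w b] a by (simp add: Beta_cdf_def)
qed

section \<open>Quantile coupling\<close>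

definition nat_quantile :: "nat pmf \<Rightarrow> real \<Rightarrow> nat" where
  "nat_quantile p u = (LEAST k. u \<le> measure_pmf.prob p {..k})"

lemma nat_quantile_eq_iff:
  assumes "finite (set_pmf p)" "u \<le> 1"
  shows "nat_quantile p u = k \<longleftrightarrow>
           u \<le> measure_pmf.prob p {..k} \<and> (k = 0 \<or> measure_pmf.prob p {..k - 1} < u)"
proof -
  let ?F = "\<lambda>k. measure_pmf.prob p {..k}"
  have "?F (Max (set_pmf p)) = 1"
    using assms(1) by (subst measure_pmf.prob_eq_1) (auto simp: AE_measure_pmf_iff)
  then have ex: "u \<le> ?F (Max (set_pmf p))" using assms(2) by simp
  have mono: "i \<le> j \<Longrightarrow> ?F i \<le> ?F j" for i j
    by (intro measure_pmf.finite_measure_mono) auto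
  show ?thesis
  proof
    assume "nat_quantile p u = k"
    then show "u \<le> ?F k \<and> (k = 0 \<or> ?F (k - 1) < u)"
      unfolding nat_quantile_def using LeastI[of "\<lambda>k. u \<le> ?F k", OF ex]
        not_less_Least[of "k - 1" "\<lambda>k. u \<le> ?F k"]
      by (metis diff_less less_numeral_extra(1) linorder_not_less neq0_conv)
  next
    assume k: "u \<le> ?F k \<and> (k = 0 \<or> ?F (k - 1) < u)"
    show "nat_quantile p u = k"
      unfolding nat_quantile_def
    proof (rule Least_equality)
      fix j assume "u \<le> ?F j"
      with k mono[of j "k - 1"] show "k \<le> j" by linarith
    qed (use k in simp)
  qed
qed

lemma measurable_nat_quantile:
  assumes "finite (set_pmf p)" "U \<in> borel_measurable M" "\<And>y. y \<in> space M \<Longrightarrow> U y \<le> 1"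
  shows "(\<lambda>y. nat_quantile p (U y)) \<in> M \<rightarrow>\<^sub>M count_space UNIV"
proof (subst measurable_count_space_eq2_countable, safe)
  fix k
  have "(\<lambda>y. nat_quantile p (U y)) -` {k} \<inter> space M =
      {y \<in> space M. U y \<le> measure_pmf.prob p {..k} \<and>
         (k = 0 \<or> measure_pmf.prob p {..k - 1} < U y)}"
    using nat_quantile_eq_iff[OF assms(1) assms(3)] by auto
  also have "\<dots> \<in> sets M" using assms(2) by measurable
  finally show "(\<lambda>y. nat_quantile p (U y)) -` {k} \<inter> space M \<in> sets M" .
qed simp

lemma distr_nat_quantile:
  assumes fin: "finite (set_pmf p)"
    and U: "U \<in> borel_measurable M" "\<And>y. y \<in> space M \<Longrightarrow> U y \<le> 1"
    and uniform: "\<And>v. 0 \<le> v \<Longrightarrow> v \<le> 1 \<Longrightarrow> emeasure M {y \<in> space M. U y \<le> v} = ennreal v"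
  shows "distr M (count_space UNIV) (\<lambda>y. nat_quantile p (U y)) = measure_pmf p"
proof (rule measure_eqI_countable[where A = UNIV])
  fix k :: nat
  let ?F = "\<lambda>k. measure_pmf.prob p {..k}" and ?X = "\<lambda>y. nat_quantile p (U y)"
  let ?S = "\<lambda>k. {y \<in> space M. U y \<le> ?F k}"
  have sets: "?S j \<in> sets M" for j using U(1) by measurable
  have "emeasure (distr M (count_space UNIV) ?X) {k} = emeasure M (?X -` {k} \<inter> space M)"
    by (rule emeasure_distr[OF measurable_nat_quantile[OF fin U]]) auto
  also have "\<dots> = ennreal (pmf p k)"
  proof (cases k)
    case 0
    then have "?X -` {k} \<inter> space M = ?S 0"
      using nat_quantile_eq_iff[OF fin U(2)] by auto
    moreover have "?F 0 = pmf p 0" by (simp add: measure_pmf_single)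
    ultimately show ?thesis using uniform[of "?F 0"] 0 by (simp add: pmf_le_1)
  next
    case (Suc j)
    have "?X y = k \<longleftrightarrow> U y \<le> ?F k \<and> \<not> U y \<le> ?F j" if "y \<in> space M" for y
      using nat_quantile_eq_iff[OF fin U(2)[OF that], of k] Suc by (simp add: not_le)
    then have "?X -` {k} \<inter> space M = ?S k - ?S j" by blast
    moreover have "?F j \<le> ?F k" "0 \<le> ?F j" "?F k \<le> 1"
      using Suc by (auto intro: measure_pmf.finite_measure_mono)
    then have "emeasure M (?S k - ?S j) = emeasure M (?S k) - emeasure M (?S j)"
      using uniform[of "?F j"] by (intro emeasure_Diff sets) auto
    moreover have "?F k = ?F j + pmf p k"
      unfolding Suc by (simp add: measure_measure_pmf_finite)
    ultimately show ?thesis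
      using uniform[of "?F k"] uniform[of "?F j"] \<open>0 \<le> ?F j\<close> \<open>?F k \<le> 1\<close> \<open>?F j \<le> ?F k\<close>
      by (simp add: ennreal_minus)
  qed
  finally show "emeasure (distr M (count_space UNIV) ?X) {k} = emeasure (measure_pmf p) {k}"
    by (simp add: emeasure_pmf_single)
qed auto

lemma Pclas_quantile_bounds:
  assumes w: "w \<ge> 1" and b: "b \<ge> 1" and n: "n > 0" and y: "0 < y" "y < 1"
  defines "k \<equiv> nat_quantile (Pclas b w n) (Beta_cdf w b y)"
  shows "real n * y \<le> real k" and "real k < real n * y + 2 * real (w + b) - 1"
proof -
  let ?r = "w + b - 1"
  have G: "Beta_cdf w b y = binomial_tail ?r y w" using y by (simp add: Beta_cdf_def)
  have "Beta_cdf w b y \<le> Pclas_cdf b w n k \<and> (k = 0 \<or> Pclas_cdf b w n (k - 1) < Beta_cdf w b y)"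
    using nat_quantile_eq_iff[OF finite_set_pmf_Pclas] Beta_cdf_bounds
    unfolding k_def Pclas_cdf_def by blast
  then have quantile: "binomial_tail ?r y w \<le> Pclas_cdf b w n k"
    "k \<noteq> 0 \<Longrightarrow> Pclas_cdf b w n (k - 1) < binomial_tail ?r y w"
    unfolding G by auto
  show "real n * y \<le> real k"
  proof (rule ccontr)
    assume "\<not> real n * y \<le> real k"
    moreover have "real n * y \<le> real n" using y by (intro mult_right_le_one_le) auto
    ultimately have "k \<le> n" by simp
    from \<open>\<not> real n * y \<le> real k\<close> have p: "0 \<le> real k / real n" "real k / real n < y"
      using n by (auto simp: divide_simps mult.commute)
    have "Pclas_cdf b w n k \<le> binomial_tail ?r (real k / real n) w"
      using p y n \<open>k \<le> n\<close> by (intro Pclas_cdf_le_binomial_tail) auto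
    also have "\<dots> < binomial_tail ?r y w"
      using w b p y by (intro binomial_tail_strict_mono) auto
    finally show False using quantile(1) by simp
  qed
  show "real k < real n * y + 2 * real (w + b) - 1"
  proof (rule ccontr)
    assume "\<not> real k < real n * y + 2 * real (w + b) - 1"
    then have k: "real n * y + 2 * real (w + b) - 1 \<le> real k" by simp
    moreover have "0 \<le> real n * y" using y by simp
    ultimately have "k \<noteq> 0" using w b by auto
    moreover have "y * (real w + real b - 1) \<le> real w + real b - 1"
      using y w b by (intro mult_left_le_one_le) auto
    ultimately have "y * (real n + real w + real b - 1) + (real w + real b - 1) \<le> real (k - 1)"
      using k by (simp add: of_nat_diff algebra_simps)
    then have "binomial_tail ?r y w \<le> Pclas_cdf b w n (k - 1)"
      using y by (intro binomial_tail_le_Pclas_cdf) auto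
    with quantile(2)[OF \<open>k \<noteq> 0\<close>] show False by simp
  qed
qed

lemma AE_Beta_distr_unit_interval: "AE y in Beta_distr a b. 0 < y \<and> y < 1"
  unfolding Beta_distr_def
  by (subst AE_density) (auto simp: beta_density_def)

lemma ex_coupling_graph:
  fixes B :: "real measure" and f :: "real \<Rightarrow> nat"
  assumes B: "prob_space B" "sets B = sets borel" and f: "f \<in> B \<rightarrow>\<^sub>M count_space UNIV"
    and P: "Measurable.pred (count_space UNIV \<Otimes>\<^sub>M lborel) (\<lambda>z. P (fst z) (snd z))"
    and AE: "AE y in B. P (f y) y"
  shows "\<exists>M :: (nat \<times> real) measure.
           prob_space M \<and>
           sets M = sets (count_space UNIV \<Otimes>\<^sub>M lborel) \<and>
           distr M (count_space UNIV) fst = distr B (count_space UNIV) f \<and>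
           distr M lborel snd = B \<and>
           (AE z in M. P (fst z) (snd z))"
proof (intro exI conjI)
  let ?N = "count_space UNIV \<Otimes>\<^sub>M (lborel :: real measure)" and ?g = "\<lambda>y. (f y, y)"
  have g: "?g \<in> B \<rightarrow>\<^sub>M ?N"
    using B(2) by (intro measurable_Pair f) (simp add: measurable_ident_sets)
  show "prob_space (distr B ?N ?g)"
    using B(1) g by (rule prob_space.prob_space_distr)
  show "sets (distr B ?N ?g) = sets ?N" by simp
  show "distr (distr B ?N ?g) (count_space UNIV) fst = distr B (count_space UNIV) f"
    using distr_distr[OF measurable_fst g] by (simp add: o_def)
  show "distr (distr B ?N ?g) lborel snd = B"
    using distr_distr[OF measurable_snd g] B(2) by (simp add: o_def distr_id2)
  show "AE z in distr B ?N ?g. P (fst z) (snd z)"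
    using AE by (subst AE_distr_iff[OF g]) (use P in \<open>simp_all add: pred_def\<close>)
qed

lemma coupling_constant_ge:
  assumes "w \<ge> 1" "b \<ge> 1"
  shows "2 * real (w + b) - 1 \<le> real b * (4 * real w + real b + 1) / 2"
proof -
  have "0 \<le> 4 * real w * (real b - 1) + (real b - 1) * (real b - 2)"
    using assms by (cases "b = 1") (auto intro!: add_nonneg_nonneg mult_nonneg_nonneg)
  then show ?thesis by (simp add: algebra_simps)
qed

theorem lemma3p2:
  fixes b w n :: nat
  assumes "b > 0" and "w > 0" and "n > 0"
  shows "\<exists>M :: (nat \<times> real) measure.
           prob_space M \<and>
           sets M = sets (count_space UNIV \<Otimes>\<^sub>M lborel) \<and>
           distr M (count_space UNIV) fst = measure_pmf (Pclas b w n) \<and>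
           distr M lborel snd = Beta_distr (real w) (real b) \<and>
           (AE p in M. \<bar>real (fst p) - real n * snd p\<bar>
                         < real b * (4 * real w + real b + 1) / 2)"
proof -
  have w: "w \<ge> 1" and b: "b \<ge> 1" using assms by auto
  let ?B = "Beta_distr (real w) (real b)"
  let ?X = "\<lambda>y. nat_quantile (Pclas b w n) (Beta_cdf w b y)"
  let ?c = "real b * (4 * real w + real b + 1) / 2"
  have X: "?X \<in> ?B \<rightarrow>\<^sub>M count_space UNIV"
    by (intro measurable_nat_quantile finite_set_pmf_Pclas) (auto simp: Beta_cdf_bounds)
  have "Measurable.pred (count_space UNIV \<Otimes>\<^sub>M lborel) (\<lambda>z. \<bar>real (fst z) - real n * snd z\<bar> < ?c)"
    by measurable
  moreover have "AE y in ?B. \<bar>real (?X y) - real n * y\<bar> < ?c"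
    using AE_Beta_distr_unit_interval
  proof (rule AE_mp, intro AE_I2 impI)
    fix y :: real assume "0 < y \<and> y < 1"
    then show "\<bar>real (?X y) - real n * y\<bar> < ?c"
      using Pclas_quantile_bounds[OF w b assms(3), of y] coupling_constant_ge[OF w b] by auto
  qed
  moreover have "distr ?B (count_space UNIV) ?X = measure_pmf (Pclas b w n)"
    using finite_set_pmf_Pclas Beta_cdf_bounds emeasure_Beta_cdf_le[OF w b]
    by (intro distr_nat_quantile) auto
  ultimately show ?thesis
    using ex_coupling_graph[OF prob_space_Beta_distr[OF w b] sets_Beta_distr X,
        where P = "\<lambda>k y. \<bar>real k - real n * y\<bar> < ?c"]
    by simp
qed

end
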